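(* Let $R:\mathbb{R}^4\to\mathbb{R}^4$ be any rotation, let $\mathcal{C}=\{(x,y,z,w)\in\mathbb{R}^4: x^2+y^2=\tfrac12=z^2+w^2\}$ be the Clifford torus, and let $Q=\pi\big(R(\mathcal{C})\setminus\{(0,0,0,1)\}\big)\subset\mathbb{R}^3$. Then there is a line $l\subset\mathbb{R}^3$ such that $Q$ has generalized reflectional symmetry along $l$.
   Context: A rotation of $\mathbb{R}^n$ is a linear map $\mathbb{R}^n\to\mathbb{R}^n$ whose matrix is orthogonal with determinant $1$. The unit three-sphere is $\mathbb{S}^3=\{\mathbf{x}\in\mathbb{R}^4:|\mathbf{x}|=1\}$, which every rotation maps onto itself. Stereographic projection $\pi:\mathbb{S}^3\setminus\{(0,0,0,1)\}\to\mathbb{R}^3$ is $\pi(x,y,z,w)=\frac{1}{1-w}(x,y,z)$. For $\mathbf{a}\in\mathbb{R}^3$ and $\rho>0$, reflection (inversion) about the sphere of center $\mathbf{a}$ and radius $\rho$ is the map $\psi_{\mathbf{a},\rho}:\mathbb{R}^3\setminus\{\mathbf{a}\}\to\mathbb{R}^3\setminus\{\mathbf{a}\}$, $\psi_{\mathbf{a},\rho}(\mathbf{p})=\rho^2\frac{\mathbf{p}-\mathbf{a}}{|\mathbf{p}-\mathbf{a}|^2}+\mathbf{a}$. A set $Q\subset\mathbb{R}^3$ has generalized reflectional symmetry along a line $l\subset\mathbb{R}^3$ if there exist a point $\mathbf{m}_0\in l$ and a number $\rho_0>0$ such that for every $\mathbf{a}\in l$, setting $\rho=\sqrt{|\mathbf{a}-\mathbf{m}_0|^2+\rho_0^2}$,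 one has $\psi_{\mathbf{a},\rho}(Q\setminus\{\mathbf{a}\})=Q\setminus\{\mathbf{a}\}$ (when $\mathbf{a}\notin Q$ this says $\psi_{\mathbf{a},\rho}(Q)=Q$). *)

theory Defs
  imports "HOL-Analysis.Analysis"
begin

definition rotation_matrix :: "real^'n^'n \<Rightarrow> bool" where
  "rotation_matrix A \<longleftrightarrow> orthogonal_matrix A \<and> det A = 1"

definition stereo :: "real^4 \<Rightarrow> real^3" where
  "stereo p = (1 / (1 - p$4)) *\<^sub>R vector [p$1, p$2, p$3]"

definition north_pole :: "real^4" where
  "north_pole = vector [0, 0, 0, 1]"

definition clifford_torus :: "(real^4) set" where
  "clifford_torus = {p. (p$1)\<^sup>2 + (p$2)\<^sup>2 = 1/2 \<and> (p$3)\<^sup>2 + (p$4)\<^sup>2 = 1/2}"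

definition sphere_inversion :: "real^3 \<Rightarrow> real \<Rightarrow> real^3 \<Rightarrow> real^3" where
  "sphere_inversion a \<rho> p = (\<rho>\<^sup>2 / (norm (p - a))\<^sup>2) *\<^sub>R (p - a) + a"

definition is_line :: "(real^3) set \<Rightarrow> bool" where
  "is_line l \<longleftrightarrow> (\<exists>p d. d \<noteq> 0 \<and> l = {p + t *\<^sub>R d | t. t \<in> (UNIV :: real set)})"

definition gen_refl_sym :: "(real^3) set \<Rightarrow> (real^3) set \<Rightarrow> bool" where
  "gen_refl_sym Q l \<longleftrightarrow> (\<exists>m0 \<in> l. \<exists>\<rho>0 > 0. \<forall>a \<in> l.
     sphere_inversion a (sqrt ((norm (a - m0))\<^sup>2 + \<rho>0\<^sup>2)) ` (Q - {a}) = Q - {a})"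

end

theory Submission
  imports Defs
begin

(* For a in R^3 put n(a) = (-a, 1). The reflection of R^4 in the hyperplane orthogonal to n(a)
   preserves S^3, and stereographic projection conjugates it to the inversion about the sphere of
   center a and radius sqrt (|a|^2 + 1). The Clifford torus is preserved by every reflection whose
   normal lies in the x1x2-plane or in the x3x4-plane, so R(C) is preserved by the reflections
   whose normal lies in the image P of one of these planes. Since the last row of R is a unit
   vector, P can be chosen not to lie in {w = 0}; then the points a with n(a) in P form a line l,
   and if m0 is the foot of the perpendicular from the origin to l, Pythagoras gives
   |a|^2 + 1 = |a - m0|^2 + (|m0|^2 + 1) for all a on l. *)

definition reflection :: "'a::real_inner \<Rightarrow> 'a \<Rightarrow> 'a" where
  "reflection n x = x - (2 * (x \<bullet> n) / (n \<bullet> n)) *\<^sub>R n"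

lemma reflection_reflection:
  assumes "n \<noteq> 0"
  shows "reflection n (reflection n x) = x"
  using assms by (simp add: reflection_def inner_diff_left algebra_simps)

lemma norm_reflection: "norm (reflection n x) = norm x"
proof (cases "n = 0")
  case False
  then show ?thesis
    by (simp add: norm_eq_sqrt_inner reflection_def inner_diff_left inner_diff_right
        inner_commute field_simps power2_eq_square)
qed (simp add: reflection_def)

lemma reflection_orthogonal_transformation:
  assumes "orthogonal_transformation f"
  shows "reflection (f n) (f x) = f (reflection n x)"
  using assms
  by (simp add: reflection_def orthogonal_transformation_def linear_diff linear_scale)

lemma reflection_component:
  "reflection n x $ k = x $ k - (2 * (x \<bullet> n) / (n \<bullet> n)) * n $ k"
  by (simp add: reflection_def)

lemma power2_norm_vec4:
  "(norm (x :: real^4))\<^sup>2 = (x$1)\<^sup>2 + (x$2)\<^sup>2 + (x$3)\<^sup>2 + (x$4)\<^sup>2"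
  by (simp only: power2_norm_eq_inner) (simp add: inner_vec_def sum_4 power2_eq_square)

lemma power2_norm_vec3:
  "(norm (x :: real^3))\<^sup>2 = (x$1)\<^sup>2 + (x$2)\<^sup>2 + (x$3)\<^sup>2"
  by (simp only: power2_norm_eq_inner) (simp add: inner_vec_def sum_3 power2_eq_square)

lemma clifford_torus_iff:
  "c \<in> clifford_torus \<longleftrightarrow> norm c = 1 \<and> (c$1)\<^sup>2 + (c$2)\<^sup>2 = 1/2"
  "c \<in> clifford_torus \<longleftrightarrow> norm c = 1 \<and> (c$3)\<^sup>2 + (c$4)\<^sup>2 = 1/2"
proof -
  have "norm c = 1 \<longleftrightarrow> (norm c)\<^sup>2 = 1"
    by (simp add: norm_eq_1 power2_norm_eq_inner)
  then show "c \<in> clifford_torus \<longleftrightarrow> norm c = 1 \<and> (c$1)\<^sup>2 + (c$2)\<^sup>2 = 1/2"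
    "c \<in> clifford_torus \<longleftrightarrow> norm c = 1 \<and> (c$3)\<^sup>2 + (c$4)\<^sup>2 = 1/2"
    unfolding power2_norm_vec4 clifford_torus_def by auto
qed

lemma reflection_clifford_torus:
  assumes "(n$3 = 0 \<and> n$4 = 0) \<or> (n$1 = 0 \<and> n$2 = 0)" and "c \<in> clifford_torus"
  shows "reflection n c \<in> clifford_torus"
  using assms(1)
proof
  assume "n$3 = 0 \<and> n$4 = 0"
  then show ?thesis
    using assms(2) norm_reflection[of n c] by (simp add: clifford_torus_iff(2) reflection_component)
next
  assume "n$1 = 0 \<and> n$2 = 0"
  then show ?thesis
    using assms(2) norm_reflection[of n c] by (simp add: clifford_torus_iff(1) reflection_component)
qed

definition inversion_normal :: "real^3 \<Rightarrow> real^4" where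
  "inversion_normal a = vector [-(a$1), -(a$2), -(a$3), 1]"

lemma vector_4 [simp]:
  "(vector [x, y, z, w] :: ('a::zero)^4) $ 1 = x"
  "(vector [x, y, z, w] :: ('a::zero)^4) $ 2 = y"
  "(vector [x, y, z, w] :: ('a::zero)^4) $ 3 = z"
  "(vector [x, y, z, w] :: ('a::zero)^4) $ 4 = w"
  by (simp_all add: vector_def)

lemma inner_vec4: "(x :: real^4) \<bullet> y = x$1 * y$1 + x$2 * y$2 + x$3 * y$3 + x$4 * y$4"
  by (simp add: inner_vec_def sum_4)

lemma inner_inversion_normal:
  "x \<bullet> inversion_normal a = x$4 - (a$1 * x$1 + a$2 * x$2 + a$3 * x$3)"
  "inversion_normal a \<bullet> inversion_normal a = (norm a)\<^sup>2 + 1"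
  by (simp_all add: inner_vec4 inversion_normal_def power2_norm_vec3) (simp add: power2_eq_square)

lemma stereo_component:
  "stereo x $ 1 = x$1 / (1 - x$4)" "stereo x $ 2 = x$2 / (1 - x$4)" "stereo x $ 3 = x$3 / (1 - x$4)"
  by (simp_all add: stereo_def)

lemma eq_north_pole_iff:
  assumes "norm y = 1"
  shows "y = north_pole \<longleftrightarrow> y$4 = 1"
proof -
  have "y \<bullet> north_pole = y$4" "north_pole \<bullet> north_pole = 1"
    by (simp_all add: inner_vec4 north_pole_def)
  then have "(norm (y - north_pole))\<^sup>2 = 2 * (1 - y$4)"
    using assms by (simp add: power2_norm_eq_inner inner_diff_left inner_diff_right
        inner_commute norm_eq_1)
  then show ?thesis by auto
qed

lemma power2_norm_stereo_diff:
  assumes "norm x = 1" and "x$4 \<noteq> 1"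
  shows "(1 - x$4) * (norm (stereo x - a))\<^sup>2
    = 2 * (x \<bullet> inversion_normal a) + ((norm a)\<^sup>2 + 1) * (1 - x$4)"
proof -
  define s where "s = 1 - x$4"
  define h :: "real^3" where "h = vector [x$1, x$2, x$3]"
  have s: "s \<noteq> 0" using assms(2) by (simp add: s_def)
  have norm_h: "(norm h)\<^sup>2 = s * (1 + x$4)"
    using assms(1) power2_norm_vec4[of x] unfolding h_def power2_norm_vec3
    by (simp add: s_def algebra_simps power2_eq_square)
  have "s * (norm (stereo x - a))\<^sup>2 = s * (norm ((1 / s) *\<^sub>R h - a))\<^sup>2"
    by (simp add: stereo_def s_def h_def)
  also have "\<dots> = (norm h)\<^sup>2 / s - 2 * (h \<bullet> a) + s * (norm a)\<^sup>2"
    using s unfolding power2_norm_eq_inner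
    by (simp add: inner_diff_left inner_diff_right inner_commute field_simps)
  also have "\<dots> = 2 * (x$4 - h \<bullet> a) + ((norm a)\<^sup>2 + 1) * s"
    using s by (simp add: norm_h) (simp add: s_def algebra_simps)
  also have "x$4 - h \<bullet> a = x \<bullet> inversion_normal a"
    unfolding inner_inversion_normal by (simp add: h_def inner_vec_def sum_3 algebra_simps)
  finally show ?thesis unfolding s_def .
qed

lemma one_minus_reflection_inversion_normal_4:
  assumes "norm x = 1" and "x$4 \<noteq> 1"
  shows "1 - reflection (inversion_normal a) x $ 4
    = (1 - x$4) * (norm (stereo x - a))\<^sup>2 / ((norm a)\<^sup>2 + 1)"
proof -
  have "(norm a)\<^sup>2 + 1 > 0" by (simp add: add_nonneg_pos)
  then show ?thesis
    using power2_norm_stereo_diff[OF assms, of a]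
    by (simp add: reflection_component inner_inversion_normal(2) field_simps)
       (simp add: inversion_normal_def)
qed

lemma stereo_eq_iff_reflection_eq_north_pole:
  assumes "norm x = 1" and "x \<noteq> north_pole"
  shows "stereo x = a \<longleftrightarrow> reflection (inversion_normal a) x = north_pole"
proof -
  have x4: "x$4 \<noteq> 1" using eq_north_pole_iff assms by blast
  have k: "(norm a)\<^sup>2 + 1 \<noteq> 0" by (smt (verit) zero_le_power2)
  have "reflection (inversion_normal a) x = north_pole
      \<longleftrightarrow> 1 - reflection (inversion_normal a) x $ 4 = 0"
    using eq_north_pole_iff[of "reflection (inversion_normal a) x"] assms(1)
    by (simp add: norm_reflection)
  also have "\<dots> \<longleftrightarrow> (norm (stereo x - a))\<^sup>2 = 0"
    using x4 k one_minus_reflection_inversion_normal_4[OF assms(1) x4, of a] by simp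
  finally show ?thesis by simp
qed

lemma sphere_inversion_stereo:
  assumes "norm x = 1" and "x \<noteq> north_pole" and "stereo x \<noteq> a"
  shows "sphere_inversion a (sqrt ((norm a)\<^sup>2 + 1)) (stereo x)
    = stereo (reflection (inversion_normal a) x)"
proof -
  define k where "k = (norm a)\<^sup>2 + 1"
  define s where "s = 1 - x$4"
  define D where "D = (norm (stereo x - a))\<^sup>2"
  define c where "c = 2 * (x \<bullet> inversion_normal a) / k"
  have x4: "x$4 \<noteq> 1" using eq_north_pole_iff assms(1,2) by blast
  have k: "k > 0" by (simp add: k_def add_nonneg_pos)
  have s: "s \<noteq> 0" using x4 by (simp add: s_def)
  have D: "D \<noteq> 0" using assms(3) by (simp add: D_def)
  have c: "c = (s * D - k * s) / k"
    using power2_norm_stereo_diff[OF assms(1) x4, of a] by (simp add: c_def s_def D_def k_def)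
  have r4: "1 - reflection (inversion_normal a) x $ 4 = s * D / k"
    using one_minus_reflection_inversion_normal_4[OF assms(1) x4, of a] by (simp add: s_def D_def k_def)
  have "reflection (inversion_normal a) x $ 1 = x$1 + c * a$1"
    "reflection (inversion_normal a) x $ 2 = x$2 + c * a$2"
    "reflection (inversion_normal a) x $ 3 = x$3 + c * a$3"
    unfolding reflection_component inner_inversion_normal(2) k_def[symmetric] c_def[symmetric]
    by (simp_all add: inversion_normal_def)
  moreover have "(k / D) * (xi / s - ai) + ai = (xi + c * ai) / (s * D / k)" for xi ai
    using k s D unfolding c by (simp add: field_simps)
  moreover have "(sqrt k)\<^sup>2 = k" using k by simp
  ultimately show ?thesis
    unfolding sphere_inversion_def vec_eq_iff forall_3 k_def[symmetric]
    by (simp add: r4 stereo_component D_def[symmetric] s_def[symmetric])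
qed

lemma inversion_normal_nonzero: "inversion_normal a \<noteq> 0"
proof
  assume "inversion_normal a = 0"
  then have "inversion_normal a $ 4 = 0" by simp
  then show False by (simp add: inversion_normal_def)
qed

lemma sphere_inversion_stereo_image:
  assumes "S \<subseteq> sphere 0 1" and "reflection (inversion_normal a) ` S \<subseteq> S"
  shows "sphere_inversion a (sqrt ((norm a)\<^sup>2 + 1)) ` (stereo ` (S - {north_pole}) - {a})
    = stereo ` (S - {north_pole}) - {a}"
proof -
  let ?f = "reflection (inversion_normal a)"
  define S' where "S' = {x \<in> S. x \<noteq> north_pole \<and> ?f x \<noteq> north_pole}"
  have ff: "?f (?f x) = x" for x
    by (rule reflection_reflection[OF inversion_normal_nonzero])
  have sphere: "norm x = 1" if "x \<in> S" for x
    using assms(1) that by auto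
  have f_S': "?f ` S' = S'"
  proof
    show "?f ` S' \<subseteq> S'"
      using assms(2) ff unfolding S'_def by auto
    then have "?f ` ?f ` S' \<subseteq> ?f ` S'"
      by (rule image_mono)
    then show "S' \<subseteq> ?f ` S'"
      by (simp add: image_image ff)
  qed
  have "stereo ` (S - {north_pole}) - {a} = stereo ` S'"
    using stereo_eq_iff_reflection_eq_north_pole[OF sphere] unfolding S'_def by blast
  moreover have "sphere_inversion a (sqrt ((norm a)\<^sup>2 + 1)) ` stereo ` S' = stereo ` ?f ` S'"
    unfolding image_image
  proof (rule image_cong[OF refl])
    fix x assume "x \<in> S'"
    then have x: "norm x = 1" "x \<noteq> north_pole" "?f x \<noteq> north_pole"
      using sphere by (auto simp: S'_def)
    then have "stereo x \<noteq> a" using stereo_eq_iff_reflection_eq_north_pole by blast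
    with x show "sphere_inversion a (sqrt ((norm a)\<^sup>2 + 1)) (stereo x) = stereo (?f x)"
      by (simp add: sphere_inversion_stereo)
  qed
  ultimately show ?thesis
    using f_S' by simp
qed

lemma gen_refl_sym_line:
  fixes p d :: "real^3"
  assumes "d \<noteq> 0" and "r > 0"
    and inv: "\<And>t. sphere_inversion (p + t *\<^sub>R d) (sqrt ((norm (p + t *\<^sub>R d))\<^sup>2 + r\<^sup>2))
      ` (Q - {p + t *\<^sub>R d}) = Q - {p + t *\<^sub>R d}"
  shows "gen_refl_sym Q {p + t *\<^sub>R d | t. t \<in> UNIV}"
  unfolding gen_refl_sym_def
proof (intro bexI exI conjI ballI)
  define m0 where "m0 = p - ((p \<bullet> d) / (d \<bullet> d)) *\<^sub>R d"
  show "m0 \<in> {p + t *\<^sub>R d | t. t \<in> UNIV}"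
    unfolding m0_def by (intro CollectI exI[of _ "- ((p \<bullet> d) / (d \<bullet> d))"]) simp
  show "sqrt ((norm m0)\<^sup>2 + r\<^sup>2) > 0"
    using \<open>r > 0\<close> by (simp add: add_nonneg_pos)
  fix a assume "a \<in> {p + t *\<^sub>R d | t. t \<in> UNIV}"
  then obtain t where a: "a = p + t *\<^sub>R d"
    by blast
  then have "a - m0 = (t + (p \<bullet> d) / (d \<bullet> d)) *\<^sub>R d"
    by (simp add: m0_def algebra_simps)
  moreover have "orthogonal m0 d"
    using \<open>d \<noteq> 0\<close> by (simp add: m0_def orthogonal_def inner_diff_left)
  ultimately have "orthogonal (a - m0) m0"
    by (simp add: orthogonal_commute orthogonal_clauses)
  then have "(norm a)\<^sup>2 = (norm (a - m0))\<^sup>2 + (norm m0)\<^sup>2"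
    using norm_add_Pythagorean[of "a - m0" m0] by simp
  then show "sphere_inversion a (sqrt ((norm (a - m0))\<^sup>2 + (sqrt ((norm m0)\<^sup>2 + r\<^sup>2))\<^sup>2)) ` (Q - {a})
      = Q - {a}"
    using inv[of t] by (simp add: a add.assoc)
qed

lemma inversion_normal_vector:
  assumes "w$4 = 1"
  shows "inversion_normal (vector [-(w$1), -(w$2), -(w$3)]) = w"
  using assms by (simp add: inversion_normal_def vec_eq_iff forall_4)

lemma inversion_normal_line_in_plane:
  fixes u v :: "real^4"
  assumes "norm u = 1" and "norm v = 1" and "orthogonal u v" and "u$4 \<noteq> 0 \<or> v$4 \<noteq> 0"
  shows "\<exists>p d. d \<noteq> 0 \<and> (\<forall>t. \<exists>\<mu> \<nu>. inversion_normal (p + t *\<^sub>R d) = \<mu> *\<^sub>R u + \<nu> *\<^sub>R v)"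
proof -
  define N where "N = (u$4)\<^sup>2 + (v$4)\<^sup>2"
  have N: "N > 0"
    using assms(4) by (auto simp: N_def add_pos_nonneg add_nonneg_pos)
  define w0 where "w0 = (u$4 / N) *\<^sub>R u + (v$4 / N) *\<^sub>R v"
  define w1 where "w1 = (- v$4) *\<^sub>R u + (u$4) *\<^sub>R v"
  define p :: "real^3" where "p = vector [-(w0$1), -(w0$2), -(w0$3)]"
  define d :: "real^3" where "d = vector [-(w1$1), -(w1$2), -(w1$3)]"
  have "w0$4 = ((u$4)\<^sup>2 + (v$4)\<^sup>2) / N"
    by (simp add: w0_def add_divide_distrib power2_eq_square)
  then have "w0$4 = 1"
    using assms(4) by (simp add: N_def)
  moreover have "w1$4 = 0"
    by (simp add: w1_def)
  have line: "inversion_normal (p + t *\<^sub>R d) = w0 + t *\<^sub>R w1" for t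
  proof -
    have "p + t *\<^sub>R d
        = vector [-((w0 + t *\<^sub>R w1)$1), -((w0 + t *\<^sub>R w1)$2), -((w0 + t *\<^sub>R w1)$3)]"
      by (simp add: p_def d_def vec_eq_iff forall_3)
    moreover have "(w0 + t *\<^sub>R w1)$4 = 1"
      using \<open>w0$4 = 1\<close> \<open>w1$4 = 0\<close> by simp
    ultimately show ?thesis
      by (metis inversion_normal_vector)
  qed
  have "(norm w1)\<^sup>2 = N"
    using assms(1-3) norm_add_Pythagorean[of "(- v$4) *\<^sub>R u" "(u$4) *\<^sub>R v"]
    by (simp add: w1_def N_def orthogonal_clauses add.commute)
  then have "w1 \<noteq> 0" using N by auto
  with \<open>w1$4 = 0\<close> have "d \<noteq> 0"
    by (auto simp: d_def vec_eq_iff forall_3 forall_4)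
  moreover have "\<exists>\<mu> \<nu>. inversion_normal (p + t *\<^sub>R d) = \<mu> *\<^sub>R u + \<nu> *\<^sub>R v" for t
    unfolding line w0_def w1_def
    by (rule exI[of _ "u$4 / N - t * v$4"], rule exI[of _ "v$4 / N + t * u$4"]) (simp add: algebra_simps)
  ultimately show ?thesis by blast
qed

lemma orthogonal_transformation_matrix_vector_mult:
  fixes R :: "real^'n^'n"
  assumes "orthogonal_matrix R"
  shows "orthogonal_transformation (\<lambda>x. R *v x)"
  using assms by (simp add: orthogonal_transformation_matrix matrix_vector_mul_linear)

lemma reflection_rotated_clifford_torus:
  fixes R :: "real^4^4"
  assumes "orthogonal_matrix R" and "(n$3 = 0 \<and> n$4 = 0) \<or> (n$1 = 0 \<and> n$2 = 0)"
  shows "reflection (R *v n) ` (\<lambda>p. R *v p) ` clifford_torus \<subseteq> (\<lambda>p. R *v p) ` clifford_torus"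
  using reflection_clifford_torus[OF assms(2)]
    reflection_orthogonal_transformation[OF orthogonal_transformation_matrix_vector_mult[OF assms(1)]]
  by auto

lemma rotated_clifford_torus_symmetry_line:
  fixes R :: "real^4^4"
  assumes "orthogonal_matrix R"
  shows "\<exists>p d. d \<noteq> 0 \<and> (\<forall>t. reflection (inversion_normal (p + t *\<^sub>R d)) ` (\<lambda>p. R *v p) ` clifford_torus
    \<subseteq> (\<lambda>p. R *v p) ` clifford_torus)"
proof -
  have from_plane: ?thesis
    if ij: "(i, j) = (1, 2) \<or> (i, j) = (3, 4)" and "R$4$i \<noteq> 0 \<or> R$4$j \<noteq> 0" for i j :: 4
  proof -
    have "i \<noteq> j" using ij by auto
    then have "norm (column i R) = 1" "norm (column j R) = 1" "orthogonal (column i R) (column j R)"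
      using assms by (auto simp: orthogonal_matrix_orthonormal_columns)
    moreover have "column i R $ 4 \<noteq> 0 \<or> column j R $ 4 \<noteq> 0"
      using that(2) by (simp add: column_def)
    ultimately obtain p d where "d \<noteq> 0" and pd:
      "\<And>t. \<exists>\<mu> \<nu>. inversion_normal (p + t *\<^sub>R d) = \<mu> *\<^sub>R column i R + \<nu> *\<^sub>R column j R"
      using inversion_normal_line_in_plane[of "column i R" "column j R"] by blast
    have "reflection (inversion_normal (p + t *\<^sub>R d)) ` (\<lambda>p. R *v p) ` clifford_torus
        \<subseteq> (\<lambda>p. R *v p) ` clifford_torus" for t
    proof -
      obtain \<mu> \<nu> where normal: "inversion_normal (p + t *\<^sub>R d) = \<mu> *\<^sub>R column i R + \<nu> *\<^sub>R column j R"
        using pd by blast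
      define n :: "real^4" where "n = \<mu> *\<^sub>R axis i 1 + \<nu> *\<^sub>R axis j 1"
      have "inversion_normal (p + t *\<^sub>R d) = R *v n"
        unfolding normal n_def
        by (simp add: matrix_vector_right_distrib matrix_vector_mult_scaleR matrix_vector_mult_basis)
      moreover have "(n$3 = 0 \<and> n$4 = 0) \<or> (n$1 = 0 \<and> n$2 = 0)"
        using ij by (auto simp: n_def axis_def)
      ultimately show ?thesis
        using reflection_rotated_clifford_torus[OF assms] by simp
    qed
    with \<open>d \<noteq> 0\<close> show ?thesis by blast
  qed
  have "norm (row 4 R) = 1"
    using assms by (simp add: orthogonal_matrix_orthonormal_rows)
  then have "row 4 R \<noteq> 0" by auto
  then have "R$4$1 \<noteq> 0 \<or> R$4$2 \<noteq> 0 \<or> R$4$3 \<noteq> 0 \<or> R$4$4 \<noteq> 0"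
    by (auto simp: row_def vec_eq_iff forall_4)
  then show ?thesis
    using from_plane[of 1 2] from_plane[of 3 4] by blast
qed

theorem theorem2:
  fixes R :: "real^4^4"
  assumes "rotation_matrix R"
  shows "\<exists>l. is_line l \<and>
           gen_refl_sym (stereo ` ((\<lambda>p. R *v p) ` clifford_torus - {north_pole})) l"
proof -
  have orth: "orthogonal_matrix R"
    using assms by (simp add: rotation_matrix_def)
  define S where "S = (\<lambda>p. R *v p) ` clifford_torus"
  have "S \<subseteq> sphere 0 1"
    using orthogonal_transformation_norm[OF orthogonal_transformation_matrix_vector_mult[OF orth]]
    by (auto simp: S_def clifford_torus_iff(1))
  moreover obtain p d where "d \<noteq> 0"
    and "\<And>t. reflection (inversion_normal (p + t *\<^sub>R d)) ` S \<subseteq> S"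
    using rotated_clifford_torus_symmetry_line[OF orth] unfolding S_def by blast
  ultimately have "gen_refl_sym (stereo ` (S - {north_pole})) {p + t *\<^sub>R d | t. t \<in> UNIV}"
    using sphere_inversion_stereo_image by (intro gen_refl_sym_line[of d 1]) simp_all
  moreover have "is_line {p + t *\<^sub>R d | t. t \<in> UNIV}"
    using \<open>d \<noteq> 0\<close> by (auto simp: is_line_def)
  ultimately show ?thesis
    unfolding S_def by blast
qed

end
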